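(* Every countable ring $R$ admits a proper norm. More precisely, let $w\colon R\to\mathbb N$ be a finite-to-one function with $w(0)=0$, $w(r)\ge2$ for $r\ne0$, and $w(r)=w(-r)$; extend $w$ to all terms $t$ in the language $\{+,\cdot\}\cup R$ (constants from $R$) by $w(t_1+t_2)=w(t_1)+w(t_2)$ and $w(t_1\cdot t_2)=w(t_1)w(t_2)$, and let $|r|$ be the minimum of $w(t)$ over all terms $t$ whose value in $R$ is $r$. Then $|\cdot|$ is a proper norm on $R$.
   Context: All rings are unital. A norm on a ring $R$ is a function $|\cdot|\colon R\to[0,\infty)$ such that $(a,b)\mapsto|a-b|$ is a metric on $R$ and $|rs|\le|r||s|$ for all $r,s\in R$; it is proper if every closed ball of this metric is compact. *)

theory Defs
  imports "HOL-Analysis.Analysis"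
begin

definition ring_norm :: "('a::ring_1 \<Rightarrow> real) \<Rightarrow> bool" where
  "ring_norm N \<longleftrightarrow> (\<forall>x. N x \<ge> 0)
      \<and> Metric_space UNIV (\<lambda>a b. N (a - b))
      \<and> (\<forall>r s. N (r * s) \<le> N r * N s)"

definition proper_ring_norm :: "('a::ring_1 \<Rightarrow> real) \<Rightarrow> bool" where
  "proper_ring_norm N \<longleftrightarrow> ring_norm N
      \<and> (\<forall>x r. compactin (Metric_space.mtopology UNIV (\<lambda>a b. N (a - b)))
                         (Metric_space.mcball UNIV (\<lambda>a b. N (a - b)) x r))"

datatype 'a rterm = Const 'a | Add "'a rterm" "'a rterm" | Mul "'a rterm" "'a rterm"

primrec rterm_val :: "'a::ring_1 rterm \<Rightarrow> 'a" where
  "rterm_val (Const r) = r"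
| "rterm_val (Add t1 t2) = rterm_val t1 + rterm_val t2"
| "rterm_val (Mul t1 t2) = rterm_val t1 * rterm_val t2"

primrec rterm_weight :: "('a \<Rightarrow> nat) \<Rightarrow> 'a rterm \<Rightarrow> nat" where
  "rterm_weight w (Const r) = w r"
| "rterm_weight w (Add t1 t2) = rterm_weight w t1 + rterm_weight w t2"
| "rterm_weight w (Mul t1 t2) = rterm_weight w t1 * rterm_weight w t2"

definition term_norm :: "('a::ring_1 \<Rightarrow> nat) \<Rightarrow> 'a \<Rightarrow> real" where
  "term_norm w r = real (LEAST n. \<exists>t. rterm_val t = r \<and> rterm_weight w t = n)"

definition admissible_weight :: "('a::ring_1 \<Rightarrow> nat) \<Rightarrow> bool" where
  "admissible_weight w \<longleftrightarrow> (\<forall>n. finite {r. w r = n})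
      \<and> w 0 = 0 \<and> (\<forall>r. r \<noteq> 0 \<longrightarrow> w r \<ge> 2) \<and> (\<forall>r. w r = w (- r))"

end

theory Submission
  imports Defs
begin

text \<open>
Every element is the value of a constant term, so the minimum defining the norm exists, and
combining optimal terms by sums and products gives subadditivity and submultiplicativity;
symmetry comes from pushing a negation down to the constants, which \<open>w\<close> cannot see.
Weights are natural numbers, so a ball of radius \<open>k\<close> consists of values of terms of weight
at most \<open>k\<close>. Since every nonzero weight is at least 2, a term of weight \<open>k + 1\<close> is
(up to summands of weight 0, which have value 0) a constant of weight at most \<open>k + 1\<close>
or a sum or product of terms of weight at most \<open>k\<close>; as \<open>w\<close> is finite-to-one, induction on
\<open>k\<close> shows that there are only finitely many such values. Balls are finite, hence compact.
For a countable ring an admissible weight is built from an injection into \<open>\<nat>\<close>.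
\<close>

lemma Metric_space_of_nat_norm:
  fixes N :: "'a::ring_1 \<Rightarrow> nat"
  assumes zero_iff: "\<And>x. N x = 0 \<longleftrightarrow> x = 0"
    and minus: "\<And>x. N (- x) = N x"
    and add: "\<And>x y. N (x + y) \<le> N x + N y"
  shows "Metric_space UNIV (\<lambda>a b. real (N (a - b)))"
proof
  fix x y z :: 'a
  show "real (N (x - y)) = real (N (y - x))"
    using minus[of "y - x"] by simp
  show "real (N (x - y)) = 0 \<longleftrightarrow> x = y"
    using zero_iff[of "x - y"] by simp
  show "real (N (x - z)) \<le> real (N (x - y)) + real (N (y - z))"
    using add[of "x - y" "y - z"] by simp
qed simp

lemma proper_ring_norm_of_nat_norm:
  fixes N :: "'a::ring_1 \<Rightarrow> nat"
  assumes zero_iff: "\<And>x. N x = 0 \<longleftrightarrow> x = 0"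
    and minus: "\<And>x. N (- x) = N x"
    and add: "\<And>x y. N (x + y) \<le> N x + N y"
    and mult: "\<And>x y. N (x * y) \<le> N x * N y"
    and finite_sublevel: "\<And>k. finite {x. N x \<le> k}"
  shows "proper_ring_norm (\<lambda>x. real (N x))"
proof -
  let ?d = "\<lambda>a b. real (N (a - b))"
  have metric: "Metric_space UNIV ?d"
    using Metric_space_of_nat_norm[OF zero_iff minus add] .
  have "ring_norm (\<lambda>x. real (N x))"
    unfolding ring_norm_def using metric mult by (simp flip: of_nat_mult)
  moreover have "compactin (Metric_space.mtopology UNIV ?d) (Metric_space.mcball UNIV ?d x r)"
    for x r
  proof -
    have "Metric_space.mcball UNIV ?d x r \<subseteq> (\<lambda>v. x - v) ` {v. N v \<le> nat \<lfloor>r\<rfloor>}"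
    proof
      fix y assume "y \<in> Metric_space.mcball UNIV ?d x r"
      then have "N (x - y) \<le> nat \<lfloor>r\<rfloor>"
        using Metric_space.in_mcball[OF metric] by simp linarith
      then show "y \<in> (\<lambda>v. x - v) ` {v. N v \<le> nat \<lfloor>r\<rfloor>}"
        by (intro rev_image_eqI[of "x - y"]) simp_all
    qed
    then have "finite (Metric_space.mcball UNIV ?d x r)"
      using finite_sublevel finite_subset by blast
    then show ?thesis
      by (intro finite_imp_compactin) (simp_all add: Metric_space.topspace_mtopology[OF metric])
  qed
  ultimately show ?thesis
    unfolding proper_ring_norm_def by blast
qed

lemma rterm_val_eq_0_if_weight_eq_0:
  assumes "admissible_weight w" "rterm_weight w t = 0"
  shows "rterm_val t = (0::'a::ring_1)"
  using assms(2)
proof (induction t)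
  case (Const r)
  then show ?case
    using assms(1) by (cases "r = 0") (auto simp: admissible_weight_def)
qed auto

lemma rterm_weight_neq_1:
  assumes "admissible_weight w"
  shows "rterm_weight w (t::'a::ring_1 rterm) \<noteq> 1"
proof (induction t)
  case (Const r)
  then show ?case
    using assms by (cases "r = 0") (auto simp: admissible_weight_def)
qed (auto simp: add_is_1)

fun rterm_uminus :: "'a::ring_1 rterm \<Rightarrow> 'a rterm" where
  "rterm_uminus (Const r) = Const (- r)"
| "rterm_uminus (Add a b) = Add (rterm_uminus a) (rterm_uminus b)"
| "rterm_uminus (Mul a b) = Mul (rterm_uminus a) b"

lemma rterm_val_uminus: "rterm_val (rterm_uminus t) = - rterm_val t"
  by (induction t) auto

lemma rterm_weight_uminus:
  "admissible_weight w \<Longrightarrow> rterm_weight w (rterm_uminus t) = rterm_weight w t"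
  by (induction t) (auto simp: admissible_weight_def)

definition weight_bounded_values :: "('a::ring_1 \<Rightarrow> nat) \<Rightarrow> nat \<Rightarrow> 'a set" where
  "weight_bounded_values w k = {rterm_val t | t. rterm_weight w t \<le> k}"

lemma weight_bounded_values_0_subset:
  "admissible_weight w \<Longrightarrow> weight_bounded_values w 0 \<subseteq> {0}"
  by (auto simp: weight_bounded_values_def rterm_val_eq_0_if_weight_eq_0)

lemma weight_bounded_values_Suc_subset:
  fixes w :: "'a::ring_1 \<Rightarrow> nat" and k :: nat
  assumes adm: "admissible_weight w"
  defines "V \<equiv> weight_bounded_values w k"
  shows "weight_bounded_values w (Suc k) \<subseteq>
           {0} \<union> {r. w r \<le> Suc k} \<union> (\<lambda>(x, y). x + y) ` (V \<times> V) \<union> (\<lambda>(x, y). x * y) ` (V \<times> V)"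
    (is "_ \<subseteq> ?F")
proof -
  have "rterm_val t \<in> ?F" if "rterm_weight w t \<le> Suc k" for t
    using that
  proof (induction t)
    case (Add t1 t2)
    consider "rterm_weight w t1 = 0" | "rterm_weight w t2 = 0"
      | "rterm_weight w t1 \<le> k" "rterm_weight w t2 \<le> k"
      using Add.prems by fastforce
    then show ?case
    proof cases
      case 3
      then have "rterm_val t1 \<in> V" "rterm_val t2 \<in> V"
        by (auto simp: V_def weight_bounded_values_def)
      then show ?thesis by force
    qed (use Add rterm_val_eq_0_if_weight_eq_0[OF adm] in auto)
  next
    case (Mul t1 t2)
    show ?case
    proof (cases "rterm_weight w t1 = 0 \<or> rterm_weight w t2 = 0")
      case True
      then show ?thesis using rterm_val_eq_0_if_weight_eq_0[OF adm] by auto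
    next
      case False
      then have "rterm_weight w t1 \<ge> 2" "rterm_weight w t2 \<ge> 2"
        using rterm_weight_neq_1[OF adm, of t1] rterm_weight_neq_1[OF adm, of t2] by linarith+
      then have "rterm_weight w t1 * 2 \<le> rterm_weight w t1 * rterm_weight w t2"
        "2 * rterm_weight w t2 \<le> rterm_weight w t1 * rterm_weight w t2"
        by simp_all
      moreover have "rterm_weight w t1 * rterm_weight w t2 \<le> Suc k"
        using Mul.prems by simp
      ultimately have "rterm_weight w t1 * 2 \<le> Suc k" "2 * rterm_weight w t2 \<le> Suc k"
        by linarith+
      then have "rterm_val t1 \<in> V" "rterm_val t2 \<in> V"
        unfolding V_def weight_bounded_values_def by fastforce+
      then show ?thesis by force
    qed
  qed simp
  then show ?thesis
    unfolding weight_bounded_values_def by blast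
qed

lemma finite_weight_bounded_values:
  assumes adm: "admissible_weight w"
  shows "finite (weight_bounded_values w k)"
proof (induction k)
  case 0
  then show ?case
    using weight_bounded_values_0_subset[OF adm] finite_subset by blast
next
  case (Suc k)
  have "{r. w r \<le> Suc k} = (\<Union>n\<le>Suc k. {r. w r = n})"
    by auto
  then have "finite {r. w r \<le> Suc k}"
    using adm by (simp add: admissible_weight_def)
  then show ?case
    using Suc weight_bounded_values_Suc_subset[OF adm, of k] by (auto intro: finite_subset)
qed

definition term_norm_nat :: "('a::ring_1 \<Rightarrow> nat) \<Rightarrow> 'a \<Rightarrow> nat" where
  "term_norm_nat w r = (LEAST n. \<exists>t. rterm_val t = r \<and> rterm_weight w t = n)"

lemma term_norm_eq_term_norm_nat: "term_norm w = (\<lambda>r. real (term_norm_nat w r))"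
  by (simp add: fun_eq_iff term_norm_def term_norm_nat_def)

lemma term_norm_nat_le: "rterm_val t = r \<Longrightarrow> term_norm_nat w r \<le> rterm_weight w t"
  unfolding term_norm_nat_def by (rule Least_le) blast

lemma term_norm_nat_attained: "\<exists>t. rterm_val t = r \<and> rterm_weight w t = term_norm_nat w r"
  unfolding term_norm_nat_def by (rule LeastI_ex) (use rterm_val.simps(1) in blast)

lemma term_norm_nat_add: "term_norm_nat w (a + b) \<le> term_norm_nat w a + term_norm_nat w b"
  using term_norm_nat_attained[of a w] term_norm_nat_attained[of b w]
    term_norm_nat_le[of "Add _ _" "a + b" w] by fastforce

lemma term_norm_nat_mult: "term_norm_nat w (a * b) \<le> term_norm_nat w a * term_norm_nat w b"
  using term_norm_nat_attained[of a w] term_norm_nat_attained[of b w]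
    term_norm_nat_le[of "Mul _ _" "a * b" w] by fastforce

lemma term_norm_nat_uminus_le:
  assumes "admissible_weight w"
  shows "term_norm_nat w (- r) \<le> term_norm_nat w r"
proof -
  obtain t where "rterm_val t = r" "rterm_weight w t = term_norm_nat w r"
    using term_norm_nat_attained by blast
  then show ?thesis
    using term_norm_nat_le[of "rterm_uminus t" "- r" w]
    by (simp add: rterm_val_uminus rterm_weight_uminus[OF assms])
qed

lemma term_norm_nat_uminus:
  "admissible_weight w \<Longrightarrow> term_norm_nat w (- r) = term_norm_nat w r"
  using term_norm_nat_uminus_le[of w r] term_norm_nat_uminus_le[of w "- r"] by simp

lemma term_norm_nat_eq_0_iff:
  assumes "admissible_weight w"
  shows "term_norm_nat w r = 0 \<longleftrightarrow> r = 0"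
proof
  assume "term_norm_nat w r = 0"
  then show "r = 0"
    using term_norm_nat_attained[of r w] rterm_val_eq_0_if_weight_eq_0[OF assms] by metis
next
  assume "r = 0"
  then show "term_norm_nat w r = 0"
    using assms term_norm_nat_le[of "Const 0" 0 w] by (simp add: admissible_weight_def)
qed

lemma finite_term_norm_nat_sublevel:
  assumes "admissible_weight w"
  shows "finite {r. term_norm_nat w r \<le> k}"
proof -
  have "{r. term_norm_nat w r \<le> k} \<subseteq> weight_bounded_values w k"
  proof
    fix r assume "r \<in> {r. term_norm_nat w r \<le> k}"
    with term_norm_nat_attained[of r w] show "r \<in> weight_bounded_values w k"
      unfolding weight_bounded_values_def by force
  qed
  then show ?thesis
    using finite_weight_bounded_values[OF assms] finite_subset by blast
qed

lemma proper_ring_norm_term_norm: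
  assumes "admissible_weight w"
  shows "proper_ring_norm (term_norm w)"
  unfolding term_norm_eq_term_norm_nat
  by (rule proper_ring_norm_of_nat_norm)
    (simp_all add: assms term_norm_nat_eq_0_iff term_norm_nat_uminus term_norm_nat_add
      term_norm_nat_mult finite_term_norm_nat_sublevel)

lemma countable_imp_admissible_weight:
  assumes "countable (UNIV :: 'a::ring_1 set)"
  shows "\<exists>w :: 'a \<Rightarrow> nat. admissible_weight w"
proof -
  obtain f :: "'a \<Rightarrow> nat" where "inj f"
    using assms by (auto simp: countable_def)
  define w where "w r = (if r = 0 then 0 else 2 + f r + f (- r))" for r
  have "{r. w r = n} \<subseteq> insert 0 (f -` {..n})" for n
    by (auto simp: w_def)
  then have "finite {r. w r = n}" for n
    using finite_vimageI[OF _ \<open>inj f\<close>] finite_subset by (metis finite_atMost finite_insert)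
  then have "admissible_weight w"
    unfolding admissible_weight_def by (auto simp: w_def)
  then show ?thesis by blast
qed

theorem mainTheorem11:
  shows "(countable (UNIV :: 'a::ring_1 set) \<longrightarrow> (\<exists>N :: 'a \<Rightarrow> real. proper_ring_norm N))
       \<and> (\<forall>w :: 'a \<Rightarrow> nat. admissible_weight w \<longrightarrow> proper_ring_norm (term_norm w))"
  using countable_imp_admissible_weight proper_ring_norm_term_norm by blast

end
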